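(* Let $n\ge1$ and $\pi\in S_n$, and set $w=\hat\pi$. Then $\pi\in\mathcal C_n(321)$ if and only if $\hat\pi_1=n$ and $$N_{\underline{32}\,\underline{41}}(w)+N_{\underline{14}\,\underline{23}}(w)+N_{\underline{41}\,\underline{32}}(w)+M(\pi)=0,$$ where $M(\pi)=\#\{(i,k): i+2\le k\le n,\ \hat\pi_k<\hat\pi_i<\hat\pi_{i+1}<\pi(\hat\pi_k)\}$. In particular, $\pi\in\mathcal C_n(321)$ iff $\hat\pi_1=n$, $\hat\pi$ avoids $\underline{32}\,\underline{41}$, $\underline{14}\,\underline{23}$, $\underline{41}\,\underline{32}$, and $M(\pi)=0$.
   Context: Permutations of $[n]$ are written in one-line notation $\pi=\pi_1\cdots\pi_n$. A permutation contains $321$ if there are $i<j<k$ with $\pi_i>\pi_j>\pi_k$. $\mathcal C_n$ is the set of cyclic permutations of $[n]$ (a single $n$-cycle), and $\mathcal C_n(321)$ those avoiding $321$. The standard cycle notation of $\pi$ writes each cycle with its largest element first, as $(m,\pi(m),\pi^2(m),\dots)$, and lists the cycles in increasing order of their largest elements. $\theta:S_n\to S_n$ sends $\pi$ to the permutation whose one-line notation is the standard cycle notation of $\pi$ with parentheses erased; $\hat\pi=\theta(\pi)$. For a sequence $w=w_1\cdots w_N$ of distinct integers, with pairs $(i,j)$ ranging over $i+2\le j\le N-1$: $N_{\underline{32}\,\underline{41}}(w)=\#\{(i,j): w_{j+1}<w_{i+1}<w_i<w_j\}$; $N_{\underline{14}\,\underline{23}}(w)=\#\{(i,j): w_i<w_j<w_{j+1}<w_{i+1}\}$;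 $N_{\underline{41}\,\underline{32}}(w)=\#\{(i,j): w_{i+1}<w_{j+1}<w_j<w_i\}$. $w$ avoids such a pattern if its count is $0$. *)

theory Defs
  imports "HOL-Combinatorics.Permutations"
begin

text \<open>Permutations of [n] are functions nat => nat with pi permutes {1..n}.
  One-line notation is 1-indexed: pi_i = pi i.\<close>

definition cyclic_perm :: "nat \<Rightarrow> (nat \<Rightarrow> nat) \<Rightarrow> bool" where
  "cyclic_perm n p \<longleftrightarrow> p permutes {1..n} \<and> (\<forall>x\<in>{1..n}. \<exists>k. (p ^^ k) 1 = x)"

definition avoids321 :: "nat \<Rightarrow> (nat \<Rightarrow> nat) \<Rightarrow> bool" where
  "avoids321 n p \<longleftrightarrow> \<not> (\<exists>i j k. 1 \<le> i \<and> i < j \<and> j < k \<and> k \<le> n \<and> p i > p j \<and> p j > p k)"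

definition cyc_len :: "(nat \<Rightarrow> nat) \<Rightarrow> nat \<Rightarrow> nat" where
  "cyc_len p m = (LEAST k. 0 < k \<and> (p ^^ k) m = m)"

definition cyc_leader :: "(nat \<Rightarrow> nat) \<Rightarrow> nat \<Rightarrow> bool" where
  "cyc_leader p m \<longleftrightarrow> (\<forall>k. (p ^^ k) m \<le> m)"

text \<open>Standard cycle notation with parentheses erased, as a list (theta(pi) in one-line notation).\<close>
definition theta :: "nat \<Rightarrow> (nat \<Rightarrow> nat) \<Rightarrow> nat list" where
  "theta n p = concat (map (\<lambda>m. map (\<lambda>k. (p ^^ k) m) [0..<cyc_len p m])
                           (filter (cyc_leader p) [1..<Suc n]))"

definition wat :: "nat list \<Rightarrow> nat \<Rightarrow> nat" where
  "wat w i = w ! (i - 1)"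

definition N_3241 :: "nat list \<Rightarrow> nat" where
  "N_3241 w = card {(i, j). 1 \<le> i \<and> i + 2 \<le> j \<and> j \<le> length w - 1 \<and>
      wat w (j+1) < wat w (i+1) \<and> wat w (i+1) < wat w i \<and> wat w i < wat w j}"

definition N_1423 :: "nat list \<Rightarrow> nat" where
  "N_1423 w = card {(i, j). 1 \<le> i \<and> i + 2 \<le> j \<and> j \<le> length w - 1 \<and>
      wat w i < wat w j \<and> wat w j < wat w (j+1) \<and> wat w (j+1) < wat w (i+1)}"

definition N_4132 :: "nat list \<Rightarrow> nat" where
  "N_4132 w = card {(i, j). 1 \<le> i \<and> i + 2 \<le> j \<and> j \<le> length w - 1 \<and>
      wat w (i+1) < wat w (j+1) \<and> wat w (j+1) < wat w j \<and> wat w j < wat w i}"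

definition Mcount :: "nat \<Rightarrow> (nat \<Rightarrow> nat) \<Rightarrow> nat" where
  "Mcount n p = (let w = theta n p in card {(i, k). 1 \<le> i \<and> i + 2 \<le> k \<and> k \<le> n \<and>
      wat w k < wat w i \<and> wat w i < wat w (i+1) \<and> wat w (i+1) < p (wat w k)})"

end

theory Submission
  imports Defs "HOL-Combinatorics.Orbits"
begin

text \<open>
  The first letter of \<open>\<theta>(\<pi>)\<close> is the smallest cycle leader, so it equals \<open>n\<close> exactly when
  \<open>n\<close> leads the cycle of every element, i.e. when \<open>\<pi>\<close> is cyclic. Then
  \<open>\<theta>(\<pi>) = n, \<pi>(n), \<pi>\<^sup>2(n), \<dots>\<close>, so \<open>\<pi>(w\<^sub>i) = w\<^sub>i\<^sub>+\<^sub>1\<close> and \<open>\<pi>(w\<^sub>n) = n\<close>.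

  A permutation whose interior points are not fixed contains 321 iff it has an excedance
  \<open>y < \<pi>(y)\<close> preceded by some \<open>x\<close> with \<open>\<pi>(x) > \<pi>(y)\<close>, or a deficiency \<open>\<pi>(x) < x\<close>
  followed by some \<open>y\<close> with \<open>\<pi>(y) < \<pi>(x)\<close>: the middle entry of a 321 is one of the two, and
  conversely a pigeonhole count on the values after \<open>y\<close> (before \<open>x\<close>) produces a 321.
  Locating \<open>x\<close> and \<open>y\<close> in \<open>\<theta>(\<pi>)\<close>, an excedance inversion is an occurrence of
  \<open>14-23\<close> (\<open>x\<close> first) or a pair counted by \<open>M\<close> (\<open>y\<close> first), and a deficiency inversion is
  an occurrence of \<open>32-41\<close> or \<open>41-32\<close>. Hence the four counts add up to the number of these
  inversions, which vanishes iff \<open>\<pi>\<close> avoids 321.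
\<close>

section \<open>Cycles and the cycle word\<close>

lemma cyc_len_eq_funpow_dist1:
  assumes "permutation p"
  shows "cyc_len p m = funpow_dist1 p m m"
proof -
  have period: "(p ^^ funpow_dist1 p m m) m = m"
    using funpow_dist1_prop[OF permutation_self_in_orbit[OF assms]] .
  show ?thesis
    unfolding cyc_len_def
  proof (rule Least_equality)
    show "0 < funpow_dist1 p m m \<and> (p ^^ funpow_dist1 p m m) m = m"
      using period zero_less_Suc by blast
    show "\<And>k. 0 < k \<and> (p ^^ k) m = m \<Longrightarrow> funpow_dist1 p m m \<le> k"
      using funpow_dist1_least[of _ p m m] not_le by blast
  qed
qed

lemma orbit_eq_image_cyc_len:
  assumes "permutation p"
  shows "orbit p m = (\<lambda>k. (p ^^ k) m) ` {0..<cyc_len p m}"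
  using orbit_conv_funpow_dist1[OF permutation_self_in_orbit[OF assms]]
  by (simp add: cyc_len_eq_funpow_dist1[OF assms])

lemma inj_on_cyc_len:
  assumes "permutation p"
  shows "inj_on (\<lambda>k. (p ^^ k) m) {0..<cyc_len p m}"
  using inj_on_funpow_dist1[OF permutation_self_in_orbit[OF assms]]
  by (simp add: cyc_len_eq_funpow_dist1[OF assms])

lemma funpow_cyc_len:
  assumes "permutation p"
  shows "(p ^^ cyc_len p m) m = m"
  using funpow_dist1_prop[OF permutation_self_in_orbit[OF assms]]
  by (simp add: cyc_len_eq_funpow_dist1[OF assms])

lemma card_orbit_eq_cyc_len:
  assumes "permutation p"
  shows "card (orbit p m) = cyc_len p m"
  by (simp add: orbit_eq_image_cyc_len[OF assms] card_image[OF inj_on_cyc_len[OF assms]])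

lemma cyc_leader_iff:
  assumes "permutation p"
  shows "cyc_leader p m \<longleftrightarrow> (\<forall>x\<in>orbit p m. x \<le> m)"
  by (auto simp: cyc_leader_def orbit_altdef_permutation[OF assms])

lemma cyc_leader_Max_orbit:
  assumes "permutation p"
  shows "cyc_leader p (Max (orbit p x))"
proof -
  have fin: "finite (orbit p x)"
    using finite_orbit[OF permutation_self_in_orbit[OF assms]] .
  have "Max (orbit p x) \<in> orbit p x"
    using fin orbit_nonempty by (rule Max_in)
  then have "orbit p (Max (orbit p x)) = orbit p x"
    by (rule orbit_cyclic_eq3[OF cyclic_on_orbit'[OF assms]])
  then show ?thesis
    using fin by (simp add: cyc_leader_iff[OF assms])
qed

lemma cyclic_perm_orbit:
  assumes "cyclic_perm n p" and "x \<in> {1..n}"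
  shows "orbit p x = {1..n}"
proof -
  have pp: "p permutes {1..n}" and reach: "\<forall>y\<in>{1..n}. \<exists>k. (p ^^ k) 1 = y"
    using assms(1) unfolding cyclic_perm_def by auto
  have perm: "permutation p"
    using pp by (auto simp: permutation_permutes)
  have "orbit p 1 \<subseteq> {1..n}"
    using assms(2) by (intro permutes_orbit_subset[OF pp]) simp
  moreover have "{1..n} \<subseteq> orbit p 1"
    using reach by (auto simp: orbit_altdef_permutation[OF perm])
  ultimately have "orbit p 1 = {1..n}" ..
  then show ?thesis
    using orbit_cyclic_eq3[OF cyclic_on_orbit'[OF perm], of x 1] assms(2) by simp
qed

lemma cyclic_perm_fixpoint:
  assumes "cyclic_perm n p" and "b \<in> {1..n}" and "p b = b"
  shows "n = 1"
proof -
  have "{1..n} = {b}"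
    using cyclic_perm_orbit[OF assms(1,2)] orbit_eq_singleton_iff[of p b] assms(3) by simp
  then have "card {1..n} = card {b}" by simp
  then show ?thesis by simp
qed

lemma cyc_len_cyclic:
  assumes cyc: "cyclic_perm n p" and "1 \<le> n"
  shows "cyc_len p n = n"
proof -
  have "permutation p"
    using cyc by (auto simp: cyclic_perm_def permutation_permutes)
  then show ?thesis
    using cyclic_perm_orbit[OF cyc, of n] card_orbit_eq_cyc_len[of p n] assms(2) by simp
qed

lemma bij_betw_funpow_cyclic:
  assumes cyc: "cyclic_perm n p" and "1 \<le> n"
  shows "bij_betw (\<lambda>k. (p ^^ k) n) {..<n} {1..n}"
proof -
  have perm: "permutation p"
    using cyc by (auto simp: cyclic_perm_def permutation_permutes)
  show ?thesis
    unfolding bij_betw_def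
    using inj_on_cyc_len[OF perm, of n] orbit_eq_image_cyc_len[OF perm, of n]
      cyc_len_cyclic[OF assms] cyclic_perm_orbit[OF cyc, of n] assms(2)
    by (simp add: atLeast0LessThan)
qed

lemma cyclic_permI:
  assumes pp: "p permutes {1..n}" and "\<And>x. x \<in> {1..n} \<Longrightarrow> n \<in> orbit p x"
  shows "cyclic_perm n p"
proof -
  have perm: "permutation p"
    using pp by (auto simp: permutation_permutes)
  have same_orbit: "orbit p x = orbit p n" if "x \<in> {1..n}" for x
    using orbit_cyclic_eq3[OF cyclic_on_orbit'[OF perm] assms(2)[OF that]] by simp
  have "x \<in> orbit p 1" if "x \<in> {1..n}" for x
    using permutation_self_in_orbit[OF perm, of x] same_orbit[OF that] same_orbit[of 1] that
    by simp
  then show ?thesis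
    unfolding cyclic_perm_def using pp by (force simp: orbit_altdef_permutation[OF perm])
qed

lemma theta_cyclic:
  assumes cyc: "cyclic_perm n p"
  shows "theta n p = map (\<lambda>k. (p ^^ k) n) [0..<n]"
proof (cases "n = 0")
  case True
  then show ?thesis by (simp add: theta_def)
next
  case False
  have perm: "permutation p"
    using cyc by (auto simp: cyclic_perm_def permutation_permutes)
  have "cyc_leader p m \<longleftrightarrow> m = n" if "m \<in> {1..n}" for m
  proof -
    have "cyc_leader p m \<longleftrightarrow> (\<forall>x\<in>{1..n}. x \<le> m)"
      by (simp add: cyc_leader_iff[OF perm] cyclic_perm_orbit[OF cyc that])
    also have "\<dots> \<longleftrightarrow> m = n"
      using that by (metis atLeastAtMost_iff le_antisym order.trans order.refl)
    finally show ?thesis .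
  qed
  then have "filter (cyc_leader p) [1..<Suc n] = filter (\<lambda>m. m = n) [1..<Suc n]"
    by (intro filter_cong) auto
  also have "\<dots> = [n]"
    using False by (simp add: filter_empty_conv)
  finally have "filter (cyc_leader p) [1..<Suc n] = [n]" .
  with cyc_len_cyclic[OF cyc] False show ?thesis
    by (simp add: theta_def)
qed

lemma wat_theta_1_le_leader:
  assumes perm: "permutation p" and "m \<in> {1..n}" and "cyc_leader p m"
  shows "wat (theta n p) 1 \<le> m"
proof -
  define L where "L = filter (cyc_leader p) [1..<Suc n]"
  have "m \<in> set L"
    using assms(2,3) by (simp add: L_def del: upt_Suc)
  then obtain m0 ms where L: "L = m0 # ms"
    by (cases L) auto
  have "0 < cyc_len p m0"
    by (simp add: cyc_len_eq_funpow_dist1[OF perm])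
  then have "[0..<cyc_len p m0] = 0 # [1..<cyc_len p m0]"
    by (simp add: upt_conv_Cons)
  then have "wat (theta n p) 1 = m0"
    unfolding theta_def wat_def L_def[symmetric] L by simp
  moreover have "sorted L"
    unfolding L_def by (rule sorted_wrt_filter) (rule sorted_upt)
  ultimately show ?thesis
    using \<open>m \<in> set L\<close> L by auto
qed

lemma cyclic_perm_if_wat_theta_1:
  assumes pp: "p permutes {1..n}" and first: "wat (theta n p) 1 = n"
  shows "cyclic_perm n p"
proof (rule cyclic_permI[OF pp])
  have perm: "permutation p"
    using pp by (auto simp: permutation_permutes)
  fix x assume x: "x \<in> {1..n}"
  define M where "M = Max (orbit p x)"
  have "M \<in> orbit p x"
    unfolding M_def using finite_orbit[OF permutation_self_in_orbit[OF perm]] orbit_nonempty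
    by (rule Max_in)
  moreover have "orbit p x \<subseteq> {1..n}"
    using permutes_orbit_subset[OF pp x] .
  moreover have "wat (theta n p) 1 \<le> M"
    by (rule wat_theta_1_le_leader[OF perm])
      (use \<open>M \<in> orbit p x\<close> \<open>orbit p x \<subseteq> {1..n}\<close> in \<open>auto simp: M_def cyc_leader_Max_orbit[OF perm]\<close>)
  ultimately show "n \<in> orbit p x"
    using first by (metis atLeastAtMost_iff le_antisym subsetD)
qed

lemma cyclic_perm_iff_wat_theta_1:
  assumes "p permutes {1..n}" and "1 \<le> n"
  shows "cyclic_perm n p \<longleftrightarrow> wat (theta n p) 1 = n"
  using theta_cyclic cyclic_perm_if_wat_theta_1[OF assms(1)] assms(2)
  by (auto simp: wat_def)

section \<open>321-avoidance through inversions\<close>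

definition excedance_inversions :: "nat \<Rightarrow> (nat \<Rightarrow> nat) \<Rightarrow> (nat \<times> nat) set" where
  "excedance_inversions n p = {(x, y). 1 \<le> x \<and> x < y \<and> y \<le> n \<and> y < p y \<and> p y < p x}"

definition deficiency_inversions :: "nat \<Rightarrow> (nat \<Rightarrow> nat) \<Rightarrow> (nat \<times> nat) set" where
  "deficiency_inversions n p = {(x, y). 1 \<le> x \<and> x < y \<and> y \<le> n \<and> p y < p x \<and> p x < x}"

lemma finite_excedance_inversions: "finite (excedance_inversions n p)"
  by (rule finite_subset[of _ "{..n} \<times> {..n}"]) (auto simp: excedance_inversions_def)

lemma finite_deficiency_inversions: "finite (deficiency_inversions n p)"
  by (rule finite_subset[of _ "{..n} \<times> {..n}"]) (auto simp: deficiency_inversions_def)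

lemma not_avoids321I:
  assumes "1 \<le> i" "i < j" "j < k" "k \<le> n" "p j < p i" "p k < p j"
  shows "\<not> avoids321 n p"
  using assms unfolding avoids321_def by blast

lemma not_avoids321_if_excedance_inversion:
  assumes pp: "p permutes {1..n}" and "(x, y) \<in> excedance_inversions n p"
  shows "\<not> avoids321 n p"
proof
  assume av: "avoids321 n p"
  have xy: "1 \<le> x" "x < y" "y \<le> n" "y < p y" "p y < p x"
    using assms(2) by (auto simp: excedance_inversions_def)
  have px: "p x \<le> n"
    using permutes_in_image[OF pp, of x] xy by simp
  have "p ` {y<..n} \<subseteq> {p y<..n} - {p x}"
  proof
    fix z assume "z \<in> p ` {y<..n}"
    then obtain k where k: "y < k" "k \<le> n" "z = p k" by auto
    have "\<not> p k < p y"
      using not_avoids321I[of x y k n p] av xy k by auto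
    moreover have "p k \<noteq> p y" "p k \<noteq> p x"
      using k xy by (simp_all add: inj_eq[OF permutes_inj[OF pp]])
    moreover have "p k \<le> n"
      using permutes_in_image[OF pp, of k] k xy by simp
    ultimately show "z \<in> {p y<..n} - {p x}"
      using k by auto
  qed
  then have "card (p ` {y<..n}) \<le> card ({p y<..n} - {p x})"
    by (rule card_mono[rotated]) simp
  moreover have "card (p ` {y<..n}) = n - y"
    using inj_on_subset[OF permutes_inj[OF pp]] by (simp add: card_image)
  moreover have "card ({p y<..n} - {p x}) = n - p y - 1"
    using xy px by simp
  ultimately show False
    using xy px by linarith
qed

lemma not_avoids321_if_deficiency_inversion:
  assumes pp: "p permutes {1..n}" and "(x, y) \<in> deficiency_inversions n p"
  shows "\<not> avoids321 n p"
proof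
  assume av: "avoids321 n p"
  have xy: "1 \<le> x" "x < y" "y \<le> n" "p y < p x" "p x < x"
    using assms(2) by (auto simp: deficiency_inversions_def)
  have py: "1 \<le> p y"
    using permutes_in_image[OF pp, of y] xy by simp
  have "p ` {1..<x} \<subseteq> {1..<p x} - {p y}"
  proof
    fix z assume "z \<in> p ` {1..<x}"
    then obtain k where k: "1 \<le> k" "k < x" "z = p k" by auto
    have "\<not> p x < p k"
      using not_avoids321I[of k x y n p] av xy k by auto
    moreover have "p k \<noteq> p x" "p k \<noteq> p y"
      using k xy by (simp_all add: inj_eq[OF permutes_inj[OF pp]])
    moreover have "1 \<le> p k"
      using permutes_in_image[OF pp, of k] k xy by simp
    ultimately show "z \<in> {1..<p x} - {p y}"
      using k by auto
  qed
  then have "card (p ` {1..<x}) \<le> card ({1..<p x} - {p y})"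
    by (rule card_mono[rotated]) simp
  moreover have "card (p ` {1..<x}) = x - 1"
    using inj_on_subset[OF permutes_inj[OF pp]] by (simp add: card_image)
  moreover have "card ({1..<p x} - {p y}) = p x - 2"
    using xy py by simp
  ultimately show False
    using xy by linarith
qed

lemma avoids321_iff_no_inversions:
  assumes pp: "p permutes {1..n}" and no_fixpoint: "\<And>b. 1 < b \<Longrightarrow> b < n \<Longrightarrow> p b \<noteq> b"
  shows "avoids321 n p \<longleftrightarrow> excedance_inversions n p = {} \<and> deficiency_inversions n p = {}"
proof
  assume "avoids321 n p"
  then show "excedance_inversions n p = {} \<and> deficiency_inversions n p = {}"
    using not_avoids321_if_excedance_inversion[OF pp] not_avoids321_if_deficiency_inversion[OF pp]
    by fast
next
  assume none: "excedance_inversions n p = {} \<and> deficiency_inversions n p = {}"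
  show "avoids321 n p"
    unfolding avoids321_def
  proof clarify
    fix a b c assume abc: "1 \<le> a" "a < b" "b < c" "c \<le> n" "p b < p a" "p c < p b"
    consider "b < p b" | "p b < b" | "p b = b" by linarith
    then show False
    proof cases
      case 1
      then have "(a, b) \<in> excedance_inversions n p"
        using abc by (simp add: excedance_inversions_def)
      then show False using none by blast
    next
      case 2
      then have "(b, c) \<in> deficiency_inversions n p"
        using abc by (simp add: deficiency_inversions_def)
      then show False using none by blast
    next
      case 3
      then show False using no_fixpoint abc by simp
    qed
  qed
qed

section \<open>Inversions read off the cycle word\<close>

locale cycle_word =
  fixes n :: nat and p \<sigma> :: "nat \<Rightarrow> nat"
  assumes permutes: "p permutes {1..n}"
    and bij: "bij_betw \<sigma> {1..n} {1..n}"
    and succ: "\<And>i. 1 \<le> i \<Longrightarrow> i < n \<Longrightarrow> \<sigma> (Suc i) = p (\<sigma> i)"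
    and last: "p (\<sigma> n) = n"
begin

lemma letter_in_range: "i \<in> {1..n} \<Longrightarrow> \<sigma> i \<in> {1..n}"
  using bij by (auto dest: bij_betw_apply)

lemma p_in_range: "x \<in> {1..n} \<Longrightarrow> p x \<in> {1..n}"
  using permutes by (rule permutes_in_image[THEN iffD2])

lemma obtain_position:
  assumes "x \<in> {1..n}"
  obtains i where "i \<in> {1..n}" "\<sigma> i = x"
  using assms bij_betw_imp_surj_on[OF bij] by (metis imageE)

lemma letter_eq_iff: "i \<in> {1..n} \<Longrightarrow> j \<in> {1..n} \<Longrightarrow> \<sigma> i = \<sigma> j \<longleftrightarrow> i = j"
  using bij by (auto simp: bij_betw_def dest: inj_onD)

lemma excedance_inversions_eq:
  "excedance_inversions n p =
     (\<lambda>(i, j). (\<sigma> i, \<sigma> j)) ` {(i, j). 1 \<le> i \<and> i + 2 \<le> j \<and> j \<le> n - 1 \<and>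
        \<sigma> i < \<sigma> j \<and> \<sigma> j < \<sigma> (j+1) \<and> \<sigma> (j+1) < \<sigma> (i+1)} \<union>
     (\<lambda>(i, k). (\<sigma> k, \<sigma> i)) ` {(i, k). 1 \<le> i \<and> i + 2 \<le> k \<and> k \<le> n \<and>
        \<sigma> k < \<sigma> i \<and> \<sigma> i < \<sigma> (i+1) \<and> \<sigma> (i+1) < p (\<sigma> k)}"
  (is "_ = ?before ` ?A \<union> ?after ` ?B")
proof (intro equalityI subsetI)
  fix xy assume "xy \<in> excedance_inversions n p"
  then obtain x y where xy: "xy = (x, y)" "1 \<le> x" "x < y" "y \<le> n" "y < p y" "p y < p x"
    by (auto simp: excedance_inversions_def)
  have "x \<in> {1..n}" "y \<in> {1..n}"
    using xy by auto
  then obtain i j where ij: "i \<in> {1..n}" "\<sigma> i = x" "j \<in> {1..n}" "\<sigma> j = y"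
    by (meson obtain_position)
  have "p x \<le> n"
    using p_in_range \<open>x \<in> {1..n}\<close> by simp
  have "i \<noteq> j"
    using ij xy by auto
  then consider "i < j" | "j < i"
    by linarith
  then show "xy \<in> ?before ` ?A \<union> ?after ` ?B"
  proof cases
    case 1
    \<comment> \<open>\<open>j = Suc i\<close> would mean \<open>y = p x\<close>, and \<open>j = n\<close> would mean \<open>p y = n\<close>\<close>
    have "j \<noteq> Suc i" "j \<noteq> n"
      using succ last ij xy \<open>p x \<le> n\<close> by auto
    then have "(i, j) \<in> ?A"
      using 1 succ ij xy by auto
    then show ?thesis
      using ij xy by force
  next
    case 2
    have "i \<noteq> Suc j"
      using succ ij xy by auto
    then have "(j, i) \<in> ?B"
      using 2 succ ij xy by auto
    then show ?thesis
      using ij xy by force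
  qed
next
  fix xy assume "xy \<in> ?before ` ?A \<union> ?after ` ?B"
  then show "xy \<in> excedance_inversions n p"
    using succ letter_in_range by (fastforce simp: excedance_inversions_def)
qed

lemma deficiency_inversions_eq:
  "deficiency_inversions n p =
     (\<lambda>(i, j). (\<sigma> i, \<sigma> j)) ` {(i, j). 1 \<le> i \<and> i + 2 \<le> j \<and> j \<le> n - 1 \<and>
        \<sigma> (j+1) < \<sigma> (i+1) \<and> \<sigma> (i+1) < \<sigma> i \<and> \<sigma> i < \<sigma> j} \<union>
     (\<lambda>(i, j). (\<sigma> j, \<sigma> i)) ` {(i, j). 1 \<le> i \<and> i + 2 \<le> j \<and> j \<le> n - 1 \<and>
        \<sigma> (i+1) < \<sigma> (j+1) \<and> \<sigma> (j+1) < \<sigma> j \<and> \<sigma> j < \<sigma> i}"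
  (is "_ = ?before ` ?A \<union> ?after ` ?B")
proof (intro equalityI subsetI)
  fix xy assume "xy \<in> deficiency_inversions n p"
  then obtain x y where xy: "xy = (x, y)" "1 \<le> x" "x < y" "y \<le> n" "p y < p x" "p x < x"
    by (auto simp: deficiency_inversions_def)
  have "x \<in> {1..n}" "y \<in> {1..n}"
    using xy by auto
  then obtain i j where ij: "i \<in> {1..n}" "\<sigma> i = x" "j \<in> {1..n}" "\<sigma> j = y"
    by (meson obtain_position)
  have "p x \<le> n"
    using p_in_range \<open>x \<in> {1..n}\<close> by simp
  have "i \<noteq> j"
    using ij xy by auto
  then consider "i < j" | "j < i"
    by linarith
  then show "xy \<in> ?before ` ?A \<union> ?after ` ?B"
  proof cases
    case 1
    have "j \<noteq> Suc i" "j \<noteq> n"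
      using succ last ij xy \<open>p x \<le> n\<close> by auto
    then have "(i, j) \<in> ?A"
      using 1 succ ij xy by auto
    then show ?thesis
      using ij xy by force
  next
    case 2
    have "i \<noteq> Suc j" "i \<noteq> n"
      using succ last ij xy by auto
    then have "(j, i) \<in> ?B"
      using 2 succ ij xy by auto
    then show ?thesis
      using ij xy by force
  qed
next
  fix xy assume "xy \<in> ?before ` ?A \<union> ?after ` ?B"
  then show "xy \<in> deficiency_inversions n p"
    using succ letter_in_range by (fastforce simp: deficiency_inversions_def)
qed

lemma card_ordered_pairs_Un:
  assumes "A \<subseteq> {(i, j). 1 \<le> i \<and> i < j \<and> j \<le> n}" and "B \<subseteq> {(i, j). 1 \<le> i \<and> i < j \<and> j \<le> n}"
  shows "card ((\<lambda>(i, j). (\<sigma> i, \<sigma> j)) ` A \<union> (\<lambda>(i, j). (\<sigma> j, \<sigma> i)) ` B) = card A + card B"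
proof -
  define P where "P = {(i, j). 1 \<le> i \<and> i < j \<and> j \<le> n}"
  have AB: "A \<subseteq> P" "B \<subseteq> P"
    using assms by (simp_all only: P_def)
  have "P \<subseteq> {..n} \<times> {..n}"
    by (auto simp: P_def)
  then have "finite P"
    by (rule finite_subset) simp
  then have "finite A" "finite B"
    using AB by (auto intro: finite_subset)
  moreover have "inj_on (\<lambda>(i, j). (\<sigma> i, \<sigma> j)) P" "inj_on (\<lambda>(i, j). (\<sigma> j, \<sigma> i)) P"
    by (auto simp: inj_on_def letter_eq_iff P_def)
  then have "inj_on (\<lambda>(i, j). (\<sigma> i, \<sigma> j)) A" "inj_on (\<lambda>(i, j). (\<sigma> j, \<sigma> i)) B"
    using AB by (auto intro: inj_on_subset)
  moreover have "(\<lambda>(i, j). (\<sigma> i, \<sigma> j)) ` A \<inter> (\<lambda>(i, j). (\<sigma> j, \<sigma> i)) ` B = {}"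
    using assms by (fastforce simp: letter_eq_iff)
  ultimately show ?thesis
    by (simp add: card_Un_disjoint card_image)
qed

end

lemma cycle_word_theta:
  assumes cyc: "cyclic_perm n p" and n: "1 \<le> n"
  shows "cycle_word n p (wat (theta n p))"
proof
  define \<sigma> where "\<sigma> = wat (theta n p)"
  have \<sigma>_Suc: "\<sigma> (Suc k) = (p ^^ k) n" if "k < n" for k
    using that by (simp add: \<sigma>_def wat_def theta_cyclic[OF cyc])
  show "p permutes {1..n}"
    using cyc by (simp add: cyclic_perm_def)
  have "bij_betw (\<sigma> \<circ> Suc) {..<n} {1..n} \<longleftrightarrow> bij_betw (\<lambda>k. (p ^^ k) n) {..<n} {1..n}"
    by (rule bij_betw_cong) (simp add: \<sigma>_Suc)
  moreover have "bij_betw \<sigma> {1..n} {1..n} \<longleftrightarrow> bij_betw (\<sigma> \<circ> Suc) {..<n} {1..n}"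
    by (rule bij_betw_comp_iff) (simp add: image_Suc_lessThan)
  ultimately show "bij_betw \<sigma> {1..n} {1..n}"
    using bij_betw_funpow_cyclic[OF cyc n] by simp
  show "\<sigma> (Suc i) = p (\<sigma> i)" if "1 \<le> i" "i < n" for i
  proof -
    obtain j where "i = Suc j"
      using \<open>1 \<le> i\<close> by (cases i) auto
    then show ?thesis
      using \<open>i < n\<close> \<sigma>_Suc[of i] \<sigma>_Suc[of j] by simp
  qed
  have "permutation p"
    using cyc by (auto simp: cyclic_perm_def permutation_permutes)
  then have "(p ^^ n) n = n"
    using funpow_cyc_len[of p n] cyc_len_cyclic[OF cyc n] by simp
  moreover obtain m where m: "n = Suc m"
    using n by (cases n) auto
  moreover have "\<sigma> n = (p ^^ m) n"
    using \<sigma>_Suc[of m] m by simp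
  ultimately show "p (\<sigma> n) = n"
    by (metis funpow.simps(2) comp_apply)
qed

lemma card_excedance_inversions_cyclic:
  assumes "cyclic_perm n p" and "1 \<le> n"
  shows "card (excedance_inversions n p) = N_1423 (theta n p) + Mcount n p"
proof -
  interpret cycle_word n p "wat (theta n p)"
    using cycle_word_theta[OF assms] .
  have "length (theta n p) = n"
    by (simp add: theta_cyclic[OF assms(1)])
  show ?thesis
    unfolding N_1423_def Mcount_def Let_def \<open>length (theta n p) = n\<close> excedance_inversions_eq
    by (intro card_ordered_pairs_Un) auto
qed

lemma card_deficiency_inversions_cyclic:
  assumes "cyclic_perm n p" and "1 \<le> n"
  shows "card (deficiency_inversions n p) = N_3241 (theta n p) + N_4132 (theta n p)"
proof -
  interpret cycle_word n p "wat (theta n p)"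
    using cycle_word_theta[OF assms] .
  have "length (theta n p) = n"
    by (simp add: theta_cyclic[OF assms(1)])
  show ?thesis
    unfolding N_3241_def N_4132_def \<open>length (theta n p) = n\<close> deficiency_inversions_eq
    by (intro card_ordered_pairs_Un) auto
qed

theorem mainTheorem4:
  fixes n :: nat and p :: "nat \<Rightarrow> nat"
  assumes "n \<ge> 1" and "p permutes {1..n}"
  shows "(cyclic_perm n p \<and> avoids321 n p) \<longleftrightarrow>
         (wat (theta n p) 1 = n \<and>
          N_3241 (theta n p) + N_1423 (theta n p) + N_4132 (theta n p) + Mcount n p = 0)"
proof (cases "cyclic_perm n p")
  case cyc: True
  have "p b \<noteq> b" if "1 < b" "b < n" for b
    using cyclic_perm_fixpoint[OF cyc, of b] that by auto
  then have "avoids321 n p \<longleftrightarrow>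
      excedance_inversions n p = {} \<and> deficiency_inversions n p = {}"
    by (rule avoids321_iff_no_inversions[OF assms(2)])
  also have "\<dots> \<longleftrightarrow> card (excedance_inversions n p) + card (deficiency_inversions n p) = 0"
    by (simp add: finite_excedance_inversions finite_deficiency_inversions)
  also have "\<dots> \<longleftrightarrow>
      N_3241 (theta n p) + N_1423 (theta n p) + N_4132 (theta n p) + Mcount n p = 0"
    by (auto simp: card_excedance_inversions_cyclic[OF cyc assms(1)]
        card_deficiency_inversions_cyclic[OF cyc assms(1)])
  finally show ?thesis
    using cyc cyclic_perm_iff_wat_theta_1[OF assms(2,1)] by simp
next
  case False
  then show ?thesis
    using cyclic_perm_iff_wat_theta_1[OF assms(2,1)] by simp
qed

end
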